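(* Let $K\subset S^3$ be a knot with Alexander module $H$. Let $k_1,k_2\geq1$ be coprime integers and let $\chi_i\colon H\to\mathbb C^*$ ($i=1,2$) be characters such that $\chi_i$ factors through $H/(t^{k_i}-1)H$. Then there is an isomorphism of representations of $\pi_K$ \[\alpha_{(k_1,\chi_1)}\otimes\alpha_{(k_2,\chi_2)}\cong \alpha_{(k_1k_2,\chi_1\chi_2)},\] where $\chi_1\chi_2$ denotes the pointwise product character (which factors through $H/(t^{k_1k_2}-1)H$).
   Context: For a knot $K$, $X_K=S^3\setminus\nu K$, $\pi_K=\pi_1(X_K)$, and $H=H_1(X_K;\mathbb Z[t^{\pm1}])$ is the Alexander module (the homology of the infinite cyclic cover, with $t$ acting by deck transformation). Then $\pi_K/\pi_K^{(2)}\cong\mathbb Z\ltimes H$, where $n\in\mathbb Z$ acts on $H$ by multiplication by $t^n$ (the generator of $\mathbb Z$ corresponding to a meridian). For $n\ge1$, a character $\chi\colon H\to\mathbb C^*$ factoring through $H/(t^n-1)H$, and $z\in\mathbb C$ with $z^n=(-1)^{n+1}$, define $\alpha_{(n,\chi)}\colon \mathbb Z\ltimes H\to \mathrm{SL}(n,\mathbb C)$ by \[\alpha_{(n,\chi)}(j,h)=P^j\cdot\mathrm{diag}\big(\chi(h),\chi(th),\dots,\chi(t^{n-1}h)\big),\] where $P$ is the $n\times n$ matrix with entries $z$ in positions $(1,n),(2,1),(3,2),\dots,(n,n-1)$ and $0$ elsewhere; its isomorphism type does not depend on the choice of $z$. It is regarded as a representation of $\pi_K$ via $\pi_K\to\pi_K/\pi_K^{(2)}\cong\mathbb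 Z\ltimes H$. *)

theory Defs
  imports Complex_Main "Jordan_Normal_Form.Matrix" "Jordan_Normal_Form.Gauss_Jordan_Elimination"
begin

text \<open>Abstract Alexander module: an abelian group H with the action of t,
  an additive bijection (so H is a Z[t,t^-1]-module).\<close>
definition alex_module :: "('h::ab_group_add \<Rightarrow> 'h) \<Rightarrow> bool" where
  "alex_module t \<longleftrightarrow> bij t \<and> (\<forall>a b. t (a + b) = t a + t b)"

definition character :: "('h::ab_group_add \<Rightarrow> complex) \<Rightarrow> bool" where
  "character \<chi> \<longleftrightarrow> (\<forall>a b. \<chi> (a + b) = \<chi> a * \<chi> b) \<and> (\<forall>a. \<chi> a \<noteq> 0)"

text \<open>chi factors through H/(t^n - 1)H, i.e. chi vanishes on (t^n - 1)H.\<close>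
definition factors_through :: "('h::ab_group_add \<Rightarrow> 'h) \<Rightarrow> nat \<Rightarrow> ('h \<Rightarrow> complex) \<Rightarrow> bool" where
  "factors_through t n \<chi> \<longleftrightarrow> (\<forall>h. \<chi> ((t ^^ n) h - h) = 1)"

text \<open>The matrix P with entries z at (1,n),(2,1),...,(n,n-1) (1-based).\<close>
definition perm_mat :: "nat \<Rightarrow> complex \<Rightarrow> complex mat" where
  "perm_mat n z = mat n n (\<lambda>(r, c). if r = (c + 1) mod n then z else 0)"

definition mat_int_pow :: "complex mat \<Rightarrow> int \<Rightarrow> complex mat" where
  "mat_int_pow A j = (if j \<ge> 0 then A ^\<^sub>m nat j else (the (mat_inverse A)) ^\<^sub>m nat (- j))"

text \<open>The representation alpha_(n,chi) of Z \<ltimes> H.\<close>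
definition alpha :: "('h::ab_group_add \<Rightarrow> 'h) \<Rightarrow> nat \<Rightarrow> complex \<Rightarrow> ('h \<Rightarrow> complex)
    \<Rightarrow> int \<Rightarrow> 'h \<Rightarrow> complex mat" where
  "alpha t n z \<chi> j h = mat_int_pow (perm_mat n z) j * mat n n (\<lambda>(r, c). if r = c then \<chi> ((t ^^ r) h) else 0)"

definition kron :: "complex mat \<Rightarrow> complex mat \<Rightarrow> complex mat" where
  "kron A B = mat (dim_row A * dim_row B) (dim_col A * dim_col B)
     (\<lambda>(i, j). A $$ (i div dim_row B, j div dim_col B) * B $$ (i mod dim_row B, j mod dim_col B))"

definition rep_iso :: "nat \<Rightarrow> (int \<Rightarrow> 'h \<Rightarrow> complex mat) \<Rightarrow> (int \<Rightarrow> 'h \<Rightarrow> complex mat) \<Rightarrow> bool" where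
  "rep_iso N \<rho>1 \<rho>2 \<longleftrightarrow> (\<exists>T \<in> carrier_mat N N. invertible_mat T \<and>
      (\<forall>j h. T * \<rho>1 j h = \<rho>2 j h * T))"

end

theory Submission
  imports Defs "Jordan_Normal_Form.Determinant" "HOL-Number_Theory.Cong"
begin

(* All matrices involved are monomial matrices: each row m has a single
   possibly nonzero entry, in column sigma(m).  Concretely, column c of
   alpha_(n,chi)(j,h) carries z^j chi(t^c h) in the row r with r = c + j (mod n).
   Index the tensor product of C^k1 and C^k2 by i = a*k2 + b (a < k1, b < k2) and
   C^(k1 k2) by m < k1 k2.  By the Chinese remainder theorem,
   sigma(m) = (m mod k1)*k2 + (m mod k2) is a bijection, and under it the shift
   by j on both factors becomes the shift by j on Z/k1k2; the character values
   agree because chi_i is t^k_i-periodic.  The only discrepancy is the scalar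
   z1^j z2^j versus z3^j, i.e. a factor w^j with w = z3/(z1 z2), and w^(k1 k2) = 1
   by the sign condition on the roots z_i (k1, k2 coprime, so not both even).
   Hence the weighted permutation matrix T with row m equal to w^m e_sigma(m)
   intertwines the two representations. *)

definition monomial_mat :: "nat \<Rightarrow> (nat \<Rightarrow> nat) \<Rightarrow> (nat \<Rightarrow> complex) \<Rightarrow> complex mat" where
  "monomial_mat N \<sigma> w = mat N N (\<lambda>(m, i). if i = \<sigma> m then w m else 0)"

lemma monomial_mat_carrier [simp]: "monomial_mat N \<sigma> w \<in> carrier_mat N N"
  and monomial_mat_dims [simp]: "dim_row (monomial_mat N \<sigma> w) = N" "dim_col (monomial_mat N \<sigma> w) = N"
  by (simp_all add: monomial_mat_def)

lemma monomial_mat_mult_left: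
  assumes "m < N" "\<sigma> m < N" "dim_row A = N" "i < dim_col A"
  shows "(monomial_mat N \<sigma> w * A) $$ (m, i) = w m * A $$ (\<sigma> m, i)"
proof -
  have "(monomial_mat N \<sigma> w * A) $$ (m, i) = (\<Sum>l<N. (if l = \<sigma> m then w m else 0) * A $$ (l, i))"
    using assms by (simp add: monomial_mat_def scalar_prod_def lessThan_atLeast0)
  also have "\<dots> = w m * A $$ (\<sigma> m, i)"
    using assms(2) by (simp add: if_distrib[of "\<lambda>x. x * _"] cong: if_cong)
  finally show ?thesis .
qed

lemma monomial_mat_mult_right:
  assumes "inj_on \<sigma> {..<N}" "l < N" "\<sigma> l = i" "i < N" "m < dim_row B" "dim_col B = N"
  shows "(B * monomial_mat N \<sigma> w) $$ (m, i) = B $$ (m, l) * w l"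
proof -
  have "(B * monomial_mat N \<sigma> w) $$ (m, i) = (\<Sum>k<N. B $$ (m, k) * (if k = l then w l else 0))"
  proof -
    have "i = \<sigma> k \<longleftrightarrow> k = l" if "k < N" for k
      using assms that by (auto dest: inj_onD)
    then show ?thesis using assms
      by (auto simp: monomial_mat_def scalar_prod_def lessThan_atLeast0 intro!: sum.cong)
  qed
  also have "\<dots> = B $$ (m, l) * w l"
    using assms(2) by (simp add: if_distrib[of "\<lambda>x. _ * x"] cong: if_cong)
  finally show ?thesis .
qed

lemma monomial_mat_mult:
  assumes "\<And>m. m < N \<Longrightarrow> \<sigma> m < N"
  shows "monomial_mat N \<sigma> v * monomial_mat N \<tau> w = monomial_mat N (\<tau> \<circ> \<sigma>) (\<lambda>m. v m * w (\<sigma> m))"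
proof (rule eq_matI)
  fix m i assume "m < dim_row (monomial_mat N (\<tau> \<circ> \<sigma>) (\<lambda>m. v m * w (\<sigma> m)))"
    and "i < dim_col (monomial_mat N (\<tau> \<circ> \<sigma>) (\<lambda>m. v m * w (\<sigma> m)))"
  then have mi: "m < N" "i < N" by simp_all
  then have "(monomial_mat N \<sigma> v * monomial_mat N \<tau> w) $$ (m, i) = v m * monomial_mat N \<tau> w $$ (\<sigma> m, i)"
    using assms by (intro monomial_mat_mult_left) simp_all
  then show "(monomial_mat N \<sigma> v * monomial_mat N \<tau> w) $$ (m, i)
      = monomial_mat N (\<tau> \<circ> \<sigma>) (\<lambda>m. v m * w (\<sigma> m)) $$ (m, i)"
    using assms mi by (simp add: monomial_mat_def)
qed simp_all

(* A monomial matrix is invertible when sigma permutes the indices and all weights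
   are nonzero; its inverse is the monomial matrix of the inverse permutation. *)
lemma monomial_mat_invertible:
  assumes "bij_betw \<sigma> {..<N} {..<N}" and "\<And>m. m < N \<Longrightarrow> w m \<noteq> 0"
  shows "invertible_mat (monomial_mat N \<sigma> w)"
proof -
  define \<rho> where "\<rho> = inv_into {..<N} \<sigma>"
  define U where "U = monomial_mat N \<rho> (\<lambda>i. 1 / w (\<rho> i))"
  have \<sigma>_range: "\<sigma> m < N" and \<rho>_\<sigma>: "\<rho> (\<sigma> m) = m" if "m < N" for m
    using assms(1) that by (auto simp: \<rho>_def bij_betw_def inv_into_f_f)
  have "monomial_mat N \<sigma> w * U = monomial_mat N (\<rho> \<circ> \<sigma>) (\<lambda>m. w m * (1 / w (\<rho> (\<sigma> m))))"
    unfolding U_def using \<sigma>_range by (rule monomial_mat_mult)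
  also have "\<dots> = 1\<^sub>m N"
    using \<rho>_\<sigma> assms(2) by (intro eq_matI) (auto simp: monomial_mat_def)
  finally have TU: "monomial_mat N \<sigma> w * U = 1\<^sub>m N" .
  moreover have "U * monomial_mat N \<sigma> w = 1\<^sub>m N"
    by (rule mat_mult_left_right_inverse[OF _ _ TU]) (simp_all add: U_def)
  ultimately show ?thesis
    unfolding invertible_mat_def inverts_mat_def square_mat.simps
    by (intro conjI exI[of _ U]) (simp_all add: U_def)
qed

(* The Gauss-Jordan inverse used in the definition of negative matrix powers is the
   two-sided inverse whenever one exists. *)
lemma mat_inverse_eqI:
  assumes A: "(A :: complex mat) \<in> carrier_mat n n" and B: "B \<in> carrier_mat n n" and AB: "A * B = 1\<^sub>m n"
  shows "mat_inverse A = Some B"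
proof -
  have BA: "B * A = 1\<^sub>m n" by (rule mat_mult_left_right_inverse[OF A B AB])
  show ?thesis
  proof (cases "mat_inverse A")
    case None
    have "A \<in> Units (ring_mat TYPE(complex) n undefined)"
      using A B AB BA by (auto simp: Units_def ring_mat_simps)
    with mat_inverse(1)[OF A None, of undefined] show ?thesis by blast
  next
    case (Some B')
    with mat_inverse(2)[OF A] have B'A: "B' * A = 1\<^sub>m n" and B': "B' \<in> carrier_mat n n" by auto
    have "B' = B' * (A * B)" using AB B' by simp
    also have "\<dots> = (B' * A) * B" using A B B' by (simp add: assoc_mult_mat)
    also have "\<dots> = B" using B'A B by simp
    finally show ?thesis using Some by simp
  qed
qed

lemma residue_eq_iff_cong:
  assumes "c < n"
  shows "int c = x mod int n \<longleftrightarrow> [int c = x] (mod int n)"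
  using assms by (simp add: cong_def)

(* The cyclic shift e_c |-> a e_(c+s) on C^n, for an integer shift s. *)
definition shift_mat :: "nat \<Rightarrow> int \<Rightarrow> complex \<Rightarrow> complex mat" where
  "shift_mat n s a = monomial_mat n (\<lambda>r. nat ((int r - s) mod int n)) (\<lambda>_. a)"

lemma shift_mat_carrier [simp]: "shift_mat n s a \<in> carrier_mat n n"
  and shift_mat_dims [simp]: "dim_row (shift_mat n s a) = n" "dim_col (shift_mat n s a) = n"
  by (simp_all add: shift_mat_def)

lemma shift_mat_index:
  assumes "r < n" "c < n"
  shows "shift_mat n s a $$ (r, c) = (if [int r = int c + s] (mod int n) then a else 0)"
proof -
  have "c = nat ((int r - s) mod int n) \<longleftrightarrow> [int c = int r - s] (mod int n)"
    using assms by (auto simp: residue_eq_iff_cong[symmetric])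
  also have "\<dots> \<longleftrightarrow> [int r = int c + s] (mod int n)"
    by (auto simp: cong_iff_dvd_diff dvd_diff_commute algebra_simps)
  finally show ?thesis using assms by (simp add: shift_mat_def monomial_mat_def)
qed

lemma shift_mat_mult:
  assumes "n > 0"
  shows "shift_mat n s a * shift_mat n u b = shift_mat n (s + u) (a * b)"
proof -
  have "nat ((int (nat ((int r - s) mod int n)) - u) mod int n) = nat ((int r - (s + u)) mod int n)" for r
    using assms by (simp add: mod_diff_left_eq diff_diff_eq)
  then show ?thesis
    using assms unfolding shift_mat_def
    by (subst monomial_mat_mult) (auto simp: comp_def nat_less_iff)
qed

lemma shift_mat_zero: "shift_mat n 0 1 = 1\<^sub>m n"
  by (intro eq_matI) (simp_all add: shift_mat_index cong_int_iff cong_def)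

lemma shift_mat_pow:
  assumes "n > 0"
  shows "shift_mat n s a ^\<^sub>m k = shift_mat n (s * int k) (a ^ k)"
proof (induction k)
  case 0
  show ?case using shift_mat_zero by simp
next
  case (Suc k)
  then show ?case using shift_mat_mult[OF assms] by (simp add: algebra_simps)
qed

lemma perm_mat_eq_shift_mat: "perm_mat n z = shift_mat n 1 z"
proof (rule eq_matI)
  fix r c assume "r < dim_row (shift_mat n 1 z)" "c < dim_col (shift_mat n 1 z)"
  then have rc: "r < n" "c < n" by simp_all
  have "r = (c + 1) mod n \<longleftrightarrow> int r = (int c + 1) mod int n"
    by (metis of_nat_1 of_nat_add of_nat_eq_iff zmod_int)
  also have "\<dots> \<longleftrightarrow> [int r = int c + 1] (mod int n)"
    using rc(1) by (rule residue_eq_iff_cong)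
  finally have "r = (c + 1) mod n \<longleftrightarrow> [int r = int c + 1] (mod int n)" .
  then show "perm_mat n z $$ (r, c) = shift_mat n 1 z $$ (r, c)"
    using rc by (simp add: perm_mat_def shift_mat_index)
qed (simp_all add: perm_mat_def shift_mat_def)

lemma mat_int_pow_perm_mat:
  assumes n: "n > 0" and z: "z \<noteq> 0"
  shows "mat_int_pow (perm_mat n z) j = shift_mat n j (z powi j)"
proof (cases "j \<ge> 0")
  case True
  then show ?thesis
    using shift_mat_pow[OF n, of 1 z "nat j"]
    by (simp add: mat_int_pow_def perm_mat_eq_shift_mat power_int_def)
next
  case False
  have "shift_mat n 1 z * shift_mat n (-1) (1 / z) = 1\<^sub>m n"
    using z by (simp add: shift_mat_mult[OF n] shift_mat_zero)
  then have "mat_inverse (perm_mat n z) = Some (shift_mat n (-1) (1 / z))"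
    unfolding perm_mat_eq_shift_mat by (intro mat_inverse_eqI) simp_all
  then have "mat_int_pow (perm_mat n z) j = shift_mat n (-1) (1 / z) ^\<^sub>m nat (- j)"
    using False by (simp add: mat_int_pow_def)
  also have "\<dots> = shift_mat n j (z powi j)"
    using False by (simp add: shift_mat_pow[OF n] power_int_def power_one_over power_inverse inverse_eq_divide)
  finally show ?thesis .
qed

lemma alpha_index:
  assumes n: "n > 0" and z: "z \<noteq> 0" and rc: "r < n" "c < n"
  shows "alpha t n z \<chi> j h $$ (r, c)
    = (if [int r = int c + j] (mod int n) then z powi j * \<chi> ((t ^^ c) h) else 0)"
proof -
  let ?\<sigma> = "\<lambda>r. nat ((int r - j) mod int n)"
  have "alpha t n z \<chi> j h $$ (r, c)
      = z powi j * mat n n (\<lambda>(r, c). if r = c then \<chi> ((t ^^ r) h) else 0) $$ (?\<sigma> r, c)"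
    unfolding alpha_def mat_int_pow_perm_mat[OF n z] shift_mat_def
    using n rc by (intro monomial_mat_mult_left) (simp_all add: nat_less_iff)
  moreover have "?\<sigma> r = c \<longleftrightarrow> [int r = int c + j] (mod int n)"
    using shift_mat_index[OF rc, of j 1] rc by (auto simp: shift_mat_def monomial_mat_def split: if_splits)
  ultimately show ?thesis using n rc by (auto simp: nat_less_iff)
qed

lemma alpha_dims [simp]:
  assumes "n > 0" "z \<noteq> 0"
  shows "dim_row (alpha t n z \<chi> j h) = n" "dim_col (alpha t n z \<chi> j h) = n"
  using assms by (simp_all add: alpha_def mat_int_pow_perm_mat)

(* A character factoring through H/(t^k - 1)H is invariant under t^k, so its values
   on the t-orbit of h only depend on the exponent modulo k. *)
lemma char_period:
  assumes c: "character \<chi>" and f: "factors_through t k \<chi>"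
  shows "\<chi> ((t ^^ (m mod k)) h) = \<chi> ((t ^^ m) h)"
proof -
  have step: "\<chi> ((t ^^ k) y) = \<chi> y" for y
  proof -
    have "\<chi> ((t ^^ k) y) = \<chi> ((t ^^ k) y - y) * \<chi> y"
      using c unfolding character_def by (metis diff_add_cancel)
    then show ?thesis using f unfolding factors_through_def by simp
  qed
  have periodic: "\<chi> ((t ^^ (k * q)) y) = \<chi> y" for q y
  proof (induction q)
    case (Suc q)
    have "(t ^^ (k * Suc q)) y = (t ^^ k) ((t ^^ (k * q)) y)"
      by (simp add: funpow_add)
    then show ?case using Suc step by simp
  qed simp
  have "(t ^^ m) h = (t ^^ (k * (m div k))) ((t ^^ (m mod k)) h)"
    by (metis comp_apply funpow_add div_mult_mod_eq mult.commute)
  then show ?thesis using periodic by simp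
qed

lemma power_int_root_of_unity_cong:
  fixes \<omega> :: complex
  assumes "\<omega> \<noteq> 0" "\<omega> ^ N = 1" "[a = b] (mod int N)"
  shows "\<omega> powi a = \<omega> powi b"
proof -
  have reduce: "\<omega> powi x = \<omega> powi (x mod int N)" for x
  proof -
    have "\<omega> powi x = \<omega> powi (x mod int N) * (\<omega> ^ N) powi (x div int N)"
      using assms(1) by (metis div_mult_mod_eq power_int_add power_int_mult power_int_of_nat add.commute mult.commute)
    then show ?thesis using assms(2) by simp
  qed
  show ?thesis using reduce[of a] reduce[of b] assms(3) by (simp add: cong_def)
qed

lemma cong_mult_modulus_iff:
  fixes x y :: int
  assumes "coprime k1 k2"
  shows "[x = y] (mod int (k1 * k2)) \<longleftrightarrow> [x = y] (mod int k1) \<and> [x = y] (mod int k2)"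
proof
  assume "[x = y] (mod int (k1 * k2))"
  then show "[x = y] (mod int k1) \<and> [x = y] (mod int k2)"
    by (auto intro: cong_modulus_mult simp: mult.commute[of "int k1"])
next
  assume "[x = y] (mod int k1) \<and> [x = y] (mod int k2)"
  moreover have "coprime (int k1) (int k2)" using assms by simp
  ultimately show "[x = y] (mod int (k1 * k2))"
    by (simp add: coprime_cong_mult)
qed

lemma cong_residue_shift:
  "[int (m mod k) = int (l mod k) + j] (mod int k) \<longleftrightarrow> [int m = int l + j] (mod int k)"
  by (simp add: cong_def of_nat_mod mod_add_left_eq)

(* The Chinese remainder map Z/k1k2 -> Z/k1 x Z/k2, with the pair (a, b) encoded as
   the Kronecker index a*k2 + b. *)
definition crt_index :: "nat \<Rightarrow> nat \<Rightarrow> nat \<Rightarrow> nat" where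
  "crt_index k1 k2 m = (m mod k1) * k2 + m mod k2"

lemma crt_index_div: "0 < k2 \<Longrightarrow> crt_index k1 k2 m div k2 = m mod k1"
  and crt_index_mod: "0 < k2 \<Longrightarrow> crt_index k1 k2 m mod k2 = m mod k2"
  by (simp_all add: crt_index_def)

lemma crt_index_less:
  assumes "0 < k1" "0 < k2"
  shows "crt_index k1 k2 m < k1 * k2"
proof -
  have "crt_index k1 k2 m < (m mod k1 + 1) * k2"
    using assms(2) by (simp add: crt_index_def)
  also have "\<dots> \<le> k1 * k2"
    using assms(1) by (intro mult_right_mono) (simp_all add: Suc_le_eq)
  finally show ?thesis .
qed

lemma crt_index_bij:
  assumes "0 < k1" "0 < k2" "coprime k1 k2"
  shows "bij_betw (crt_index k1 k2) {..<k1 * k2} {..<k1 * k2}"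
proof -
  have "m = m'" if "m < k1 * k2" "m' < k1 * k2" "crt_index k1 k2 m = crt_index k1 k2 m'" for m m'
  proof -
    have "[m = m'] (mod k1)" "[m = m'] (mod k2)"
      using that(3) crt_index_div[OF assms(2)] crt_index_mod[OF assms(2)]
      by (metis cong_def)+
    then have "[m = m'] (mod k1 * k2)" using assms(3) by (rule coprime_cong_mult_nat)
    then show ?thesis using that(1,2) by (simp add: cong_def)
  qed
  then have "inj_on (crt_index k1 k2) {..<k1 * k2}" by (auto intro: inj_onI)
  moreover have "crt_index k1 k2 ` {..<k1 * k2} \<subseteq> {..<k1 * k2}"
    using crt_index_less[OF assms(1,2)] by auto
  ultimately show ?thesis by (simp add: bij_betw_def endo_inj_surj)
qed

lemma kron_dims [simp]:
  "dim_row (kron A B) = dim_row A * dim_row B" "dim_col (kron A B) = dim_col A * dim_col B"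
  by (simp_all add: kron_def)

lemma kron_index:
  assumes "i < dim_row A * dim_row B" "i' < dim_col A * dim_col B"
  shows "kron A B $$ (i, i')
    = A $$ (i div dim_row B, i' div dim_col B) * B $$ (i mod dim_row B, i' mod dim_col B)"
  using assms by (simp add: kron_def)

lemma nonzero_root:
  assumes "(z :: complex) ^ k = (-1) ^ (k + 1)"
  shows "z \<noteq> 0"
  using assms by (cases k) auto

(* For coprime k1, k2 the sign conditions on z1, z2, z3 make z3/(z1 z2) a
   (k1 k2)-th root of unity: (k1+1)k2 + (k2+1)k1 and k1 k2 + 1 have the same parity
   because k1 and k2 are not both even. *)
lemma root_sign_product:
  fixes z1 z2 z3 :: complex
  assumes "coprime k1 k2" "z1 ^ k1 = (-1) ^ (k1 + 1)" "z2 ^ k2 = (-1) ^ (k2 + 1)"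
    "z3 ^ (k1 * k2) = (-1) ^ (k1 * k2 + 1)"
  shows "(z1 * z2) ^ (k1 * k2) = z3 ^ (k1 * k2)"
proof -
  have not_both_even: "\<not> (even k1 \<and> even k2)"
    using assms(1) coprime_common_divisor[of k1 k2 2] by auto
  have "(z1 * z2) ^ (k1 * k2) = (z1 ^ k1) ^ k2 * (z2 ^ k2) ^ k1"
    by (simp add: power_mult_distrib power_mult[symmetric] mult.commute)
  also have "\<dots> = ((-1) ^ (k1 + 1)) ^ k2 * ((-1) ^ (k2 + 1)) ^ k1"
    using assms(2,3) by (simp only:)
  also have "\<dots> = (-1) ^ ((k1 + 1) * k2 + (k2 + 1) * k1)"
    by (simp only: power_mult power_add)
  also have "\<dots> = (-1) ^ (k1 * k2 + 1)"
    using not_both_even by (cases "even k1"; cases "even k2") (auto simp: neg_one_even_power neg_one_odd_power)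
  finally show ?thesis using assms(4) by simp
qed

(* Entrywise both sides are nonzero exactly when m = l + j modulo k1 k2,
   where column i' corresponds to l; there the character values agree by
   periodicity and the scalars agree since w^m = w^(l+j). *)
lemma kron_alpha_intertwined:
  fixes \<omega> :: complex
  assumes k: "0 < k1" "0 < k2" "coprime k1 k2"
    and \<chi>1: "character \<chi>1" "factors_through t k1 \<chi>1"
    and \<chi>2: "character \<chi>2" "factors_through t k2 \<chi>2"
    and z: "z1 \<noteq> 0" "z2 \<noteq> 0" and \<omega>: "\<omega> \<noteq> 0" "\<omega> ^ (k1 * k2) = 1"
  defines "T \<equiv> monomial_mat (k1 * k2) (crt_index k1 k2) (\<lambda>m. \<omega> ^ m)"
  shows "T * kron (alpha t k1 z1 \<chi>1 j h) (alpha t k2 z2 \<chi>2 j h)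
       = alpha t (k1 * k2) (\<omega> * (z1 * z2)) (\<lambda>h. \<chi>1 h * \<chi>2 h) j h * T"
proof (rule eq_matI)
  let ?N = "k1 * k2" and ?\<sigma> = "crt_index k1 k2"
  let ?A1 = "alpha t k1 z1 \<chi>1 j h" and ?A2 = "alpha t k2 z2 \<chi>2 j h"
  let ?A = "alpha t ?N (\<omega> * (z1 * z2)) (\<lambda>h. \<chi>1 h * \<chi>2 h) j h"
  have N: "0 < ?N" and z3: "\<omega> * (z1 * z2) \<noteq> 0" using k z \<omega> by simp_all
  fix m i' assume "m < dim_row (?A * T)" "i' < dim_col (?A * T)"
  then have mi: "m < ?N" "i' < ?N" using N z3 by (simp_all add: T_def)
  obtain l where l: "l < ?N" "?\<sigma> l = i'"
    using crt_index_bij[OF k] mi(2) by (metis bij_betw_iff_bijections lessThan_iff)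
  have lhs: "(T * kron ?A1 ?A2) $$ (m, i') = \<omega> ^ m * (?A1 $$ (m mod k1, l mod k1) * ?A2 $$ (m mod k2, l mod k2))"
  proof -
    have "(T * kron ?A1 ?A2) $$ (m, i') = \<omega> ^ m * kron ?A1 ?A2 $$ (?\<sigma> m, i')"
      unfolding T_def using mi k z crt_index_less[OF k(1,2)] by (intro monomial_mat_mult_left) simp_all
    then show ?thesis
      using mi k z crt_index_less[OF k(1,2)]
      by (simp add: kron_index crt_index_div crt_index_mod flip: l(2))
  qed
  have rhs: "(?A * T) $$ (m, i') = ?A $$ (m, l) * \<omega> ^ l"
    unfolding T_def using crt_index_bij[OF k] l mi N z3
    by (intro monomial_mat_mult_right) (simp_all add: bij_betw_def)
  have congruence: "[int m = int l + j] (mod int ?N)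
      \<longleftrightarrow> [int (m mod k1) = int (l mod k1) + j] (mod int k1) \<and> [int (m mod k2) = int (l mod k2) + j] (mod int k2)"
    unfolding cong_residue_shift by (rule cong_mult_modulus_iff[OF k(3)])
  have scalar: "\<omega> ^ m * (z1 powi j * z2 powi j) = (\<omega> * (z1 * z2)) powi j * \<omega> ^ l"
    if "[int m = int l + j] (mod int ?N)"
  proof -
    have "\<omega> ^ m = \<omega> powi (int l + j)"
      using power_int_root_of_unity_cong[OF \<omega> that] by (simp add: power_int_of_nat)
    also have "\<dots> = \<omega> ^ l * \<omega> powi j" using \<omega>(1) by (simp add: power_int_add power_int_of_nat)
    finally show ?thesis by (simp add: power_int_mult_distrib)
  qed
  show "(T * kron ?A1 ?A2) $$ (m, i') = (?A * T) $$ (m, i')"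
    unfolding lhs rhs using mi l k z z3 congruence scalar
      char_period[OF \<chi>1, of l h] char_period[OF \<chi>2, of l h]
    by (simp add: alpha_index)
qed (use k z \<omega> in \<open>simp_all add: T_def\<close>)

theorem proposition4:
  fixes t :: "'h::ab_group_add \<Rightarrow> 'h" and k1 k2 :: nat and \<chi>1 \<chi>2 :: "'h \<Rightarrow> complex"
    and z1 z2 z3 :: complex
  assumes "alex_module t"
    and "k1 \<ge> 1" and "k2 \<ge> 1" and "coprime k1 k2"
    and "character \<chi>1" and "character \<chi>2"
    and "factors_through t k1 \<chi>1" and "factors_through t k2 \<chi>2"
    and "z1 ^ k1 = (-1) ^ (k1 + 1)" and "z2 ^ k2 = (-1) ^ (k2 + 1)"
    and "z3 ^ (k1 * k2) = (-1) ^ (k1 * k2 + 1)"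
  shows "rep_iso (k1 * k2)
           (\<lambda>j h. kron (alpha t k1 z1 \<chi>1 j h) (alpha t k2 z2 \<chi>2 j h))
           (alpha t (k1 * k2) z3 (\<lambda>h. \<chi>1 h * \<chi>2 h))"
proof -
  have k: "0 < k1" "0 < k2" "coprime k1 k2" using assms(2-4) by simp_all
  have z: "z1 \<noteq> 0" "z2 \<noteq> 0" "z3 \<noteq> 0" using assms(9-11) by (simp_all add: nonzero_root)
  define \<omega> where "\<omega> = z3 / (z1 * z2)"
  have \<omega>: "\<omega> \<noteq> 0" "\<omega> ^ (k1 * k2) = 1" and z3: "\<omega> * (z1 * z2) = z3"
    using z root_sign_product[OF assms(4,9-11)] by (simp_all add: \<omega>_def power_divide)
  define T where "T = monomial_mat (k1 * k2) (crt_index k1 k2) (\<lambda>m. \<omega> ^ m)"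
  have "invertible_mat T"
    unfolding T_def by (rule monomial_mat_invertible[OF crt_index_bij[OF k]]) (simp add: \<omega>(1))
  moreover have "T * kron (alpha t k1 z1 \<chi>1 j h) (alpha t k2 z2 \<chi>2 j h)
      = alpha t (k1 * k2) z3 (\<lambda>h. \<chi>1 h * \<chi>2 h) j h * T" for j h
    unfolding T_def z3[symmetric] by (rule kron_alpha_intertwined[OF k assms(5,7,6,8) z(1,2) \<omega>])
  ultimately show ?thesis unfolding rep_iso_def T_def by auto
qed

end
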